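(* Let $(X,\gamma)$ be a probability space and let $E_i\subseteq X$, $i\in\mathbb N$, be pairwise independent measurable sets with $\sum_{i=1}^\infty\gamma(E_i)=\infty$. Then for every measurable $E\subseteq X$ and every $\varepsilon>0$ there exists a positive integer $i$ such that $\gamma(E\cap E_i)>(\gamma(E)-\varepsilon)\gamma(E_i)$. *)

theory Defs
  imports "HOL-Probability.Probability"
begin

end

theory Submission
  imports Defs
begin

(*
  Put Y = \<Sum>\<^sub>i\<^sub>\<in>\<^sub>I (1_{E_i} - \<gamma>(E_i)) and S = \<Sum>\<^sub>i\<^sub>\<in>\<^sub>I \<gamma>(E_i). Pairwise independence makes the
  summands of Y uncorrelated, so \<integral>Y\<^sup>2 = \<Sum>\<^sub>i\<^sub>\<in>\<^sub>I \<gamma>(E_i)(1 - \<gamma>(E_i)) \<le> S. If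
  \<gamma>(E \<inter> E_i) \<le> (\<gamma>(E) - \<epsilon>)\<gamma>(E_i) for every i \<in> I, then \<integral>Y 1_E \<le> -\<epsilon>S, and Cauchy-Schwarz
  gives (\<epsilon>S)\<^sup>2 \<le> (\<integral>Y\<^sup>2) \<gamma>(E) \<le> S, i.e. S \<le> 1/\<epsilon>\<^sup>2. So if the theorem failed, all partial
  sums of the divergent series \<Sum> \<gamma>(E_i) would be bounded by 1/\<epsilon>\<^sup>2.
*)

lemma discriminant_le_of_nonneg_quadratic:
  fixes a b c :: real
  assumes nonneg: "\<And>t. 0 \<le> a + 2 * b * t + c * t\<^sup>2"
  shows "b\<^sup>2 \<le> a * c"
proof (cases "c = 0")
  case True
  have "b = 0"
  proof (rule ccontr)
    assume "b \<noteq> 0"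
    then show False
      using nonneg[of "- (a + 1) / (2 * b)"] True by (simp add: field_simps)
  qed
  then show ?thesis using True by simp
next
  case False
  have "0 < c"
  proof (rule ccontr)
    assume "\<not> 0 < c"
    with False have c: "c < 0" by simp
    define t where "t = 1 + (\<bar>a\<bar> + 2 * \<bar>b\<bar>) / - c"
    have t1: "1 \<le> t" using c by (simp add: t_def divide_nonneg_neg)
    have ct: "- c * t = - c + \<bar>a\<bar> + 2 * \<bar>b\<bar>" using c by (simp add: t_def right_diff_distrib)
    have "a \<le> \<bar>a\<bar> * t" using t1 abs_ge_self[of a] mult_left_mono[OF t1 abs_ge_zero[of a]] by simp
    moreover have "2 * b * t \<le> 2 * \<bar>b\<bar> * t" using t1 by (simp add: mult_right_mono)
    ultimately have "a + 2 * b * t + c * t\<^sup>2 \<le> \<bar>a\<bar> * t + 2 * \<bar>b\<bar> * t - (- c * t) * t"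
      by (simp add: power2_eq_square algebra_simps)
    also have "\<dots> = (\<bar>a\<bar> + 2 * \<bar>b\<bar> - (- c * t)) * t" by (simp add: algebra_simps)
    also have "\<dots> = c * t" unfolding ct by simp
    also have "\<dots> < 0" using c t1 by (simp add: mult_neg_pos)
    finally show False using nonneg[of t] by simp
  qed
  have "0 \<le> a + 2 * b * (- b / c) + c * (- b / c)\<^sup>2" by (rule nonneg)
  also have "\<dots> = (a * c - b\<^sup>2) / c"
    using False by (simp add: field_simps power2_eq_square)
  finally show ?thesis using \<open>0 < c\<close> by (simp add: zero_le_divide_iff)
qed

lemma integrable_mult_of_square_integrable:
  fixes f g :: "'a \<Rightarrow> real"
  assumes [measurable]: "f \<in> borel_measurable M" "g \<in> borel_measurable M"
    and "integrable M (\<lambda>x. (f x)\<^sup>2)" "integrable M (\<lambda>x. (g x)\<^sup>2)"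
  shows "integrable M (\<lambda>x. f x * g x)"
proof (rule Bochner_Integration.integrable_bound)
  show "integrable M (\<lambda>x. (f x)\<^sup>2 + (g x)\<^sup>2)" using assms by simp
  have "\<bar>f x * g x\<bar> \<le> (f x)\<^sup>2 + (g x)\<^sup>2" for x
  proof -
    have "2 * \<bar>f x\<bar> * \<bar>g x\<bar> \<le> \<bar>f x\<bar>\<^sup>2 + \<bar>g x\<bar>\<^sup>2" by (rule sum_squares_bound)
    moreover have "0 \<le> \<bar>f x\<bar> * \<bar>g x\<bar>" by simp
    ultimately show ?thesis unfolding abs_mult power2_abs by linarith
  qed
  then show "AE x in M. norm (f x * g x) \<le> norm ((f x)\<^sup>2 + (g x)\<^sup>2)" by simp
qed measurable

lemma Cauchy_Schwarz_integral:
  fixes f g :: "'a \<Rightarrow> real"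
  assumes [measurable]: "f \<in> borel_measurable M" "g \<in> borel_measurable M"
    and f2: "integrable M (\<lambda>x. (f x)\<^sup>2)" and g2: "integrable M (\<lambda>x. (g x)\<^sup>2)"
  shows "(\<integral>x. f x * g x \<partial>M)\<^sup>2 \<le> (\<integral>x. (f x)\<^sup>2 \<partial>M) * (\<integral>x. (g x)\<^sup>2 \<partial>M)"
proof (rule discriminant_le_of_nonneg_quadratic)
  have fg: "integrable M (\<lambda>x. f x * g x)"
    using integrable_mult_of_square_integrable[OF assms] .
  fix t :: real
  have "0 \<le> (\<integral>x. (f x + t * g x)\<^sup>2 \<partial>M)" by simp
  also have "(\<lambda>x. (f x + t * g x)\<^sup>2) = (\<lambda>x. (f x)\<^sup>2 + (2 * t) * (f x * g x) + t\<^sup>2 * (g x)\<^sup>2)"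
    by (simp add: power2_sum power_mult_distrib algebra_simps)
  also have "(\<integral>x. (f x)\<^sup>2 + (2 * t) * (f x * g x) + t\<^sup>2 * (g x)\<^sup>2 \<partial>M)
      = (\<integral>x. (f x)\<^sup>2 \<partial>M) + 2 * (\<integral>x. f x * g x \<partial>M) * t + (\<integral>x. (g x)\<^sup>2 \<partial>M) * t\<^sup>2"
    using f2 g2 fg by simp
  finally show "0 \<le> (\<integral>x. (f x)\<^sup>2 \<partial>M) + 2 * (\<integral>x. f x * g x \<partial>M) * t + (\<integral>x. (g x)\<^sup>2 \<partial>M) * t\<^sup>2" .
qed

lemma (in prob_space) prob_inter_eq_mult_if_indep_event:
  assumes "indep_event A B"
  shows "prob (A \<inter> B) = prob A * prob B"
proof -
  have "indep_events (case_bool A B) UNIV"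
    using assms unfolding indep_event_def .
  then have "prob (\<Inter>j\<in>UNIV. case_bool A B j) = (\<Prod>j\<in>UNIV. prob (case_bool A B j))"
    unfolding indep_events_def by (auto simp del: UNIV_bool)
  then show ?thesis by (simp add: UNIV_bool Int_commute)
qed

lemma (in finite_measure) integrable_indicator_real [simp]:
  "A \<in> sets M \<Longrightarrow> integrable M (indicator A :: 'a \<Rightarrow> real)"
  by (simp add: less_top[symmetric])

definition (in prob_space) centred_count :: "('i \<Rightarrow> 'a set) \<Rightarrow> 'i set \<Rightarrow> 'a \<Rightarrow> real" where
  "centred_count F I x = (\<Sum>i\<in>I. indicator (F i) x - prob (F i))"

lemma (in prob_space)
  assumes "finite I" and events: "\<And>i. i \<in> I \<Longrightarrow> F i \<in> events" and "G \<in> events"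
  shows integrable_centred_count_mult_indicator:
      "integrable M (\<lambda>x. centred_count F I x * indicator G x)"
    and expectation_centred_count_mult_indicator:
      "expectation (\<lambda>x. centred_count F I x * indicator G x) = (\<Sum>i\<in>I. prob (F i \<inter> G) - prob (F i) * prob G)"
proof -
  have expand: "centred_count F I x * indicator G x
      = (\<Sum>i\<in>I. indicator (F i \<inter> G) x - prob (F i) * indicator G x)" for x
    unfolding centred_count_def sum_distrib_right indicator_inter_arith by (simp add: algebra_simps)
  show "integrable M (\<lambda>x. centred_count F I x * indicator G x)"
    unfolding expand using events \<open>G \<in> events\<close> by auto
  show "expectation (\<lambda>x. centred_count F I x * indicator G x) = (\<Sum>i\<in>I. prob (F i \<inter> G) - prob (F i) * prob G)"
    unfolding expand using events \<open>G \<in> events\<close>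
    by (simp add: Bochner_Integration.integral_sum Int_absorb2 sets.sets_into_space)
qed

lemma (in prob_space)
  assumes "finite I" and events: "\<And>i. i \<in> I \<Longrightarrow> F i \<in> events"
  shows integrable_centred_count: "integrable M (centred_count F I)"
    and expectation_centred_count: "expectation (centred_count F I) = 0"
proof -
  have "integrable M (\<lambda>x. centred_count F I x * indicator (space M) x)"
    "expectation (\<lambda>x. centred_count F I x * indicator (space M) x) = 0"
    using integrable_centred_count_mult_indicator[of I F "space M"]
      expectation_centred_count_mult_indicator[of I F "space M"] assms
    by (simp_all add: Int_absorb2 sets.sets_into_space prob_space)
  moreover have "\<And>x. x \<in> space M \<Longrightarrow> centred_count F I x * indicator (space M) x = centred_count F I x"
    by simp
  ultimately show "integrable M (centred_count F I)" "expectation (centred_count F I) = 0"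
    by (simp_all cong: Bochner_Integration.integrable_cong Bochner_Integration.integral_cong)
qed

lemma (in prob_space)
  assumes "finite I" and events: "\<And>i. i \<in> I \<Longrightarrow> F i \<in> events"
    and indep: "\<And>i j. i \<in> I \<Longrightarrow> j \<in> I \<Longrightarrow> i \<noteq> j \<Longrightarrow> prob (F i \<inter> F j) = prob (F i) * prob (F j)"
  shows integrable_centred_count_square: "integrable M (\<lambda>x. (centred_count F I x)\<^sup>2)"
    and expectation_centred_count_square:
      "expectation (\<lambda>x. (centred_count F I x)\<^sup>2) = (\<Sum>i\<in>I. prob (F i) * (1 - prob (F i)))"
proof -
  have expand: "(centred_count F I x)\<^sup>2
      = (\<Sum>j\<in>I. centred_count F I x * indicator (F j) x - prob (F j) * centred_count F I x)" for x
    unfolding power2_eq_square by (subst (2) centred_count_def) (simp add: sum_distrib_left algebra_simps)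
  have integrable_summands: "integrable M (\<lambda>x. centred_count F I x * indicator (F j) x - prob (F j) * centred_count F I x)"
    if "j \<in> I" for j
    using that events by (intro Bochner_Integration.integrable_diff integrable_mult_right
        integrable_centred_count_mult_indicator[OF \<open>finite I\<close> events]
        integrable_centred_count[OF \<open>finite I\<close> events])
  then show "integrable M (\<lambda>x. (centred_count F I x)\<^sup>2)"
    unfolding expand by auto
  have diagonal: "(\<Sum>i\<in>I. prob (F i \<inter> F j) - prob (F i) * prob (F j)) = prob (F j) * (1 - prob (F j))"
    if "j \<in> I" for j
  proof -
    have "(\<Sum>i\<in>I - {j}. prob (F i \<inter> F j) - prob (F i) * prob (F j)) = 0"
      using that indep by (intro sum.neutral) auto
    then show ?thesis
      using that \<open>finite I\<close> by (simp add: sum.remove algebra_simps power2_eq_square)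
  qed
  show "expectation (\<lambda>x. (centred_count F I x)\<^sup>2) = (\<Sum>i\<in>I. prob (F i) * (1 - prob (F i)))"
    unfolding expand using integrable_summands events assms
    by (simp add: Bochner_Integration.integral_sum expectation_centred_count_mult_indicator
        integrable_centred_count_mult_indicator integrable_centred_count expectation_centred_count diagonal)
qed

lemma (in prob_space) sum_prob_le_if_prob_inter_le:
  assumes "finite I" and events: "\<And>i. i \<in> I \<Longrightarrow> F i \<in> events"
    and indep: "\<And>i j. i \<in> I \<Longrightarrow> j \<in> I \<Longrightarrow> i \<noteq> j \<Longrightarrow> prob (F i \<inter> F j) = prob (F i) * prob (F j)"
    and "E \<in> events" and "0 < \<epsilon>"
    and inter_le: "\<And>i. i \<in> I \<Longrightarrow> prob (E \<inter> F i) \<le> (prob E - \<epsilon>) * prob (F i)"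
  shows "(\<Sum>i\<in>I. prob (F i)) \<le> 1 / \<epsilon>\<^sup>2"
proof -
  define S where "S = (\<Sum>i\<in>I. prob (F i))"
  define Y where "Y = centred_count F I"
  have "0 \<le> S" unfolding S_def by (simp add: sum_nonneg)
  have "expectation (\<lambda>x. Y x * indicator E x) = (\<Sum>i\<in>I. prob (F i \<inter> E) - prob (F i) * prob E)"
    unfolding Y_def using \<open>finite I\<close> events \<open>E \<in> events\<close> by (rule expectation_centred_count_mult_indicator)
  also have "\<dots> \<le> (\<Sum>i\<in>I. - \<epsilon> * prob (F i))"
    using inter_le by (intro sum_mono) (auto simp: Int_commute algebra_simps)
  also have "\<dots> = - (\<epsilon> * S)" by (simp add: S_def sum_distrib_left sum_negf)
  finally have covariance: "\<epsilon> * S \<le> - expectation (\<lambda>x. Y x * indicator E x)" by simp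
  have Y_square_integrable: "integrable M (\<lambda>x. (Y x)\<^sup>2)"
    unfolding Y_def using \<open>finite I\<close> events indep by (rule integrable_centred_count_square)
  have "expectation (\<lambda>x. (Y x)\<^sup>2) = (\<Sum>i\<in>I. prob (F i) * (1 - prob (F i)))"
    unfolding Y_def using \<open>finite I\<close> events indep by (rule expectation_centred_count_square)
  also have "\<dots> \<le> S"
    unfolding S_def by (intro sum_mono) (simp add: mult_left_le)
  finally have variance: "expectation (\<lambda>x. (Y x)\<^sup>2) \<le> S" .
  have indicator_square: "(\<lambda>x. (indicator E x :: real)\<^sup>2) = indicator E"
    by (simp add: fun_eq_iff indicator_def)
  have "(\<epsilon> * S)\<^sup>2 \<le> (expectation (\<lambda>x. Y x * indicator E x))\<^sup>2"
    using power_mono[OF covariance, of 2] \<open>0 < \<epsilon>\<close> \<open>0 \<le> S\<close> by simp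
  also have "\<dots> \<le> expectation (\<lambda>x. (Y x)\<^sup>2) * expectation (\<lambda>x. (indicator E x :: real)\<^sup>2)"
  proof (rule Cauchy_Schwarz_integral)
    show "Y \<in> borel_measurable M"
      unfolding Y_def using \<open>finite I\<close> events by (intro borel_measurable_integrable integrable_centred_count)
  qed (use Y_square_integrable \<open>E \<in> events\<close> in \<open>simp_all add: indicator_square\<close>)
  also have "\<dots> \<le> S * 1"
    using variance \<open>E \<in> events\<close> \<open>0 \<le> S\<close> by (intro mult_mono) (simp_all add: indicator_square)
  finally have "\<epsilon>\<^sup>2 * S\<^sup>2 \<le> S" by (simp add: power_mult_distrib)
  then have "\<epsilon>\<^sup>2 * S \<le> 1"
    using \<open>0 \<le> S\<close> by (cases "S = 0") (auto simp: power2_eq_square)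
  then show ?thesis
    using \<open>0 < \<epsilon>\<close> by (simp add: S_def le_divide_eq mult.commute)
qed

theorem mainTheorem11:
  fixes M :: "'a measure" and Es :: "nat \<Rightarrow> 'a set" and E :: "'a set" and \<epsilon> :: real
  assumes "prob_space M"
    and "\<And>i. i \<ge> 1 \<Longrightarrow> Es i \<in> sets M"
    and "\<And>i j. i \<ge> 1 \<Longrightarrow> j \<ge> 1 \<Longrightarrow> i \<noteq> j \<Longrightarrow> prob_space.indep_event M (Es i) (Es j)"
    and "\<not> summable (\<lambda>i. measure M (Es (Suc i)))"
    and "E \<in> sets M"
    and "\<epsilon> > 0"
  shows "\<exists>i::nat. i \<ge> 1 \<and> measure M (E \<inter> Es i) > (measure M E - \<epsilon>) * measure M (Es i)"
proof (rule ccontr)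
  interpret prob_space M by fact
  assume "\<not> ?thesis"
  then have inter_le: "\<And>i. i \<ge> 1 \<Longrightarrow> prob (E \<inter> Es i) \<le> (prob E - \<epsilon>) * prob (Es i)"
    by (auto simp: not_less)
  have "(\<Sum>i<n. prob (Es (Suc i))) \<le> 1 / \<epsilon>\<^sup>2" for n
  proof -
    have "(\<Sum>i\<in>{1..n}. prob (Es i)) \<le> 1 / \<epsilon>\<^sup>2"
      by (rule sum_prob_le_if_prob_inter_le[where E = E])
        (use assms inter_le prob_inter_eq_mult_if_indep_event in auto)
    then show ?thesis by (simp add: sum.atLeast1_atMost_eq)
  qed
  then have "summable (\<lambda>i. prob (Es (Suc i)))"
    by (intro summableI_nonneg_bounded) auto
  with assms(4) show False by simp
qed

end
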